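(* Let $(\mathbf f,\mathbf g)$ be a vector admissible system, $\epsilon\in\mathcal E$, $L,w\in\mathbb N$, and let $\mathbf X$ be the fixed point of the one-sided spatially-coupled system obtained as the limit of its recursion from the all-ones initialization (so that, in particular, its rows are non-decreasing in the position index). Then $\mathbf x^\infty(\mathbf x_{i_0};\epsilon)$ exists, $\mathbf x_{i_0}\preceq\mathbf x^\infty(\mathbf x_{i_0};\epsilon)$, and $U(\mathbf x_{i_0};\epsilon)\ge U(\mathbf x^\infty(\mathbf x_{i_0};\epsilon);\epsilon)$, where $U$ is the single-system potential.
   Context: Let $d\in\mathbb N$, $\mathcal X=[0,1]^d$, $\mathcal E=[0,1]$, $\mathcal X^\circ=\mathcal X\setminus\{\mathbf 0\}$; vectors are row vectors and $\mathbf x\preceq\mathbf y$ means $x_i\le y_i$ for all $i$. Let $\mathbf D$ be a $d\times d$ positive diagonal matrix, $\mathbf f:\mathcal X\times\mathcal E\to\mathcal X$, $\mathbf g:\mathcal X\to\mathcal X$, and $F,G$ scalar functionals with $\nabla_{\mathbf x}F(\mathbf x;\epsilon)=\mathbf f(\mathbf x;\epsilon)\mathbf D$, $\nabla G(\mathbf x)=\mathbf g(\mathbf x)\mathbf D$, $F(\mathbf 0;\epsilon)=G(\mathbf 0)=0$. $(\mathbf f,\mathbf g)$ is a vector admissible system if: (i) $\mathbf f,\mathbf g$ are $C^2$; (ii) $\mathbf f(\mathbf x;\epsilon)$, $\mathbf g(\mathbf x)$ are non-decreasing in $\mathbf x$ w.r.t. $\preceq$; (iii) for $\mathbf x\in\mathcal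 X^\circ$, $\epsilon_1<\epsilon_2$ implies $\mathbf f(\mathbf x;\epsilon_1)\preceq\mathbf f(\mathbf x;\epsilon_2)$ and $\mathbf f(\mathbf x;\epsilon_1)\ne\mathbf f(\mathbf x;\epsilon_2)$; (iv) $\mathbf f(\mathbf 0;\epsilon)=\mathbf f(\mathbf x;0)=\mathbf g(\mathbf 0)=\mathbf 0$, $F(\mathbf x;0)=0$. Single-system potential: $U(\mathbf x;\epsilon)=\mathbf g(\mathbf x)\mathbf D\mathbf x^{\mathsf T}-G(\mathbf x)-F(\mathbf g(\mathbf x);\epsilon)$. $\mathbf x^\infty(\mathbf x;\epsilon)=\lim_{\ell\to\infty}\mathbf x^{(\ell)}$ for the recursion $\mathbf x^{(\ell+1)}=\mathbf f(\mathbf g(\mathbf x^{(\ell)});\epsilon)$, $\mathbf x^{(0)}=\mathbf x$, when the limit exists. One-sided spatially-coupled system: let $\epsilon_i=\epsilon$ for $i\in\{-L,\dots,L\}$, $\epsilon_i=0$ otherwise, $i_0=\lfloor (w-1)/2\rfloor$. Iterates $\mathbf x_i^{(\ell)}$, $i\in\{-L,\dots,L+w-1\}$, start from $\mathbf x_i^{(0)}=\mathbf 1$, with $\mathbf x_i^{(\ell)}=\mathbf 0$ for $i<-L$; for $-L\le i\le i_0$, $\mathbf x_i^{(\ell+1)}=\frac1w\sum_{k=0}^{w-1}\mathbf f\big(\frac1w\sum_{j=0}^{w-1}\mathbf g(\mathbf x^{(\ell)}_{i+j-k});\epsilon_{i-k}\big)$, and for $i_0<i\le L+w-1$, $\mathbf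 x_i^{(\ell)}=\mathbf x_{i_0}^{(\ell)}$. Its fixed point $\mathbf X$ has rows $\mathbf x_{-L},\dots,\mathbf x_{L+w-1}$. *)

theory Defs
  imports "HOL-Analysis.Analysis"
begin

text \<open>Vectors in R^d are elements of real^'d; the partial order \<preceq> is the
componentwise order on real^'d (library instance). Row vector times matrix is v*.\<close>

definition cube :: "(real^'d) set" where
  "cube = {x. 0 \<le> x \<and> x \<le> 1}"

definition Eset :: "real set" where
  "Eset = {0..1}"

definition C2_on :: "'a::real_normed_vector set \<Rightarrow> ('a \<Rightarrow> 'b::real_normed_vector) \<Rightarrow> bool" where
  "C2_on S h \<longleftrightarrow> (\<exists>h' h''.
      (\<forall>x\<in>S. (h has_derivative blinfun_apply (h' x)) (at x within S)) \<and>
      (\<forall>x\<in>S. (h' has_derivative blinfun_apply (h'' x)) (at x within S)) \<and>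
      continuous_on S h'')"

definition pos_diag :: "real^'d^'d \<Rightarrow> bool" where
  "pos_diag D \<longleftrightarrow> (\<forall>i j. i \<noteq> j \<longrightarrow> D$i$j = 0) \<and> (\<forall>i. D$i$i > 0)"

definition vector_admissible ::
  "(real^'d \<Rightarrow> real \<Rightarrow> real^'d) \<Rightarrow> (real^'d \<Rightarrow> real^'d) \<Rightarrow>
   (real^'d \<Rightarrow> real \<Rightarrow> real) \<Rightarrow> (real^'d \<Rightarrow> real) \<Rightarrow> real^'d^'d \<Rightarrow> bool" where
  "vector_admissible f g F G D \<longleftrightarrow>
     pos_diag D \<and>
     (\<forall>x\<in>cube. \<forall>e\<in>Eset. f x e \<in> cube) \<and>
     (\<forall>x\<in>cube. g x \<in> cube) \<and>
     (\<forall>e\<in>Eset. \<forall>x\<in>cube. ((\<lambda>y. F y e) has_derivative (\<lambda>h. (f x e v* D) \<bullet> h)) (at x within cube)) \<and>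
     (\<forall>x\<in>cube. (G has_derivative (\<lambda>h. (g x v* D) \<bullet> h)) (at x within cube)) \<and>
     (\<forall>e\<in>Eset. F 0 e = 0) \<and> G 0 = 0 \<and>
     \<comment> \<open>(i)\<close>
     C2_on (cube \<times> Eset) (\<lambda>(x, e). f x e) \<and> C2_on cube g \<and>
     \<comment> \<open>(ii)\<close>
     (\<forall>e\<in>Eset. \<forall>x\<in>cube. \<forall>y\<in>cube. x \<le> y \<longrightarrow> f x e \<le> f y e) \<and>
     (\<forall>x\<in>cube. \<forall>y\<in>cube. x \<le> y \<longrightarrow> g x \<le> g y) \<and>
     \<comment> \<open>(iii)\<close>
     (\<forall>x\<in>cube - {0}. \<forall>e1\<in>Eset. \<forall>e2\<in>Eset. e1 < e2 \<longrightarrow> f x e1 \<le> f x e2 \<and> f x e1 \<noteq> f x e2) \<and>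
     \<comment> \<open>(iv)\<close>
     (\<forall>e\<in>Eset. f 0 e = 0) \<and> (\<forall>x\<in>cube. f x 0 = 0) \<and> g 0 = 0 \<and> (\<forall>x\<in>cube. F x 0 = 0)"

definition potU ::
  "(real^'d \<Rightarrow> real^'d) \<Rightarrow> (real^'d \<Rightarrow> real \<Rightarrow> real) \<Rightarrow> (real^'d \<Rightarrow> real) \<Rightarrow> real^'d^'d
   \<Rightarrow> real^'d \<Rightarrow> real \<Rightarrow> real" where
  "potU g F G D x e = (g x v* D) \<bullet> x - G x - F (g x) e"

definition single_iter :: "(real^'d \<Rightarrow> real \<Rightarrow> real^'d) \<Rightarrow> (real^'d \<Rightarrow> real^'d) \<Rightarrow> real
   \<Rightarrow> real^'d \<Rightarrow> nat \<Rightarrow> real^'d" where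
  "single_iter f g e x l = ((\<lambda>y. f (g y) e) ^^ l) x"

definition i0_of :: "nat \<Rightarrow> int" where
  "i0_of w = (int w - 1) div 2"

text \<open>One-sided spatially-coupled recursion; positions are integers i,
 x_i = 0 for i < -L, positions i > i0 copy position i0.\<close>
primrec sc_iter :: "(real^'d \<Rightarrow> real \<Rightarrow> real^'d) \<Rightarrow> (real^'d \<Rightarrow> real^'d) \<Rightarrow> nat \<Rightarrow> nat \<Rightarrow> real
   \<Rightarrow> nat \<Rightarrow> int \<Rightarrow> real^'d" where
  "sc_iter f g L w e 0 = (\<lambda>i. if i < - int L then 0 else 1)"
| "sc_iter f g L w e (Suc l) =
     (let x = sc_iter f g L w e l;
          ep = (\<lambda>i::int. if - int L \<le> i \<and> i \<le> int L then e else 0);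
          upd = (\<lambda>i::int. (1 / real w) *\<^sub>R
                   (\<Sum>k<w. f ((1 / real w) *\<^sub>R (\<Sum>j<w. g (x (i + int j - int k)))) (ep (i - int k))))
      in (\<lambda>i. if i < - int L then 0 else if i \<le> i0_of w then upd i else upd (i0_of w)))"

end

theory Submission imports Defs begin

(* Coupled part: by induction on the iteration count every iterate is a
   "profile" -- a vector field with values in the cube, non-decreasing in the
   position and constant to the right of i0.  For a profile, the update at i0
   is dominated by the single-system step T(y) = f(g(y);e) applied to the value
   at i0, because every window average of g is below g(x_i0) and the coupling
   parameters are at most e.  Passing to the limit (T is continuous) shows that
   x = X(i0) is a sub-solution: x <= T(x).

   Single-system part: starting from a sub-solution the iterates of the
   monotone map T increase inside the cube, hence converge to some x_inf >= x.
   A mean value argument, using that f, g are monotone gradients (with respect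
   to the diagonal metric D) of F, G, shows U(T(a)) <= U(a) whenever a <= T(a);
   so U decreases along the iterates and, by continuity, U(x_inf) <= U(x). *)

lemma diag_form:
  assumes "pos_diag D"
  shows "((p::real^'d) v* D) \<bullet> q = (\<Sum>i\<in>UNIV. p$i * D$i$i * q$i)"
proof -
  have column: "(\<Sum>i\<in>UNIV. p$i * D$i$j) = p$j * D$j$j" for j
  proof -
    have "(\<Sum>i\<in>UNIV. p$i * D$i$j) = (\<Sum>i\<in>UNIV. if i = j then p$j * D$j$j else 0)"
      by (rule sum.cong) (use assms in \<open>auto simp: pos_diag_def\<close>)
    then show ?thesis by simp
  qed
  show ?thesis unfolding vector_matrix_mult_def inner_vec_def
    by (simp add: column algebra_simps)
qed

lemma diag_form_mono:
  assumes D: "pos_diag D" and "(p::real^'d) \<le> p'" and "0 \<le> q"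
  shows "(p v* D) \<bullet> q \<le> (p' v* D) \<bullet> q"
  unfolding diag_form[OF D]
proof (rule sum_mono)
  fix i
  have "p$i * D$i$i \<le> p'$i * D$i$i"
    using assms by (intro mult_right_mono) (auto simp: less_eq_vec_def pos_diag_def less_imp_le)
  then show "p$i * D$i$i * q$i \<le> p'$i * D$i$i * q$i"
    by (rule mult_right_mono) (use assms(3) in \<open>auto simp: less_eq_vec_def\<close>)
qed

lemma closed_cube: "closed (cube :: (real^'d) set)"
proof -
  have cube: "cube = {x::real^'d. \<forall>i. 0 \<le> x$i} \<inter> {x. \<forall>i. x$i \<le> 1}"
    by (auto simp: cube_def less_eq_vec_def)
  have "closed {x::real^'d. \<forall>i. x$i \<le> 1}"
    using closed_interval_left_cart[of "1::real^'d"] by simp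
  then show ?thesis unfolding cube by (intro closed_Int closed_positive_orthant)
qed

lemma limit_in_cube:
  fixes s :: "nat \<Rightarrow> real^'d"
  assumes "\<And>l. s l \<in> cube" "s \<longlonglongrightarrow> a"
  shows "a \<in> cube"
  using closed_cube assms closed_sequentially by blast

lemma limit_le:
  fixes s t :: "nat \<Rightarrow> real^'d"
  assumes "\<And>l. s l \<le> t l" "s \<longlonglongrightarrow> a" "t \<longlonglongrightarrow> b"
  shows "a \<le> b"
  unfolding less_eq_vec_def
proof
  fix i
  show "a $ i \<le> b $ i"
    by (rule LIMSEQ_le[OF tendsto_vec_nth[OF assms(2)] tendsto_vec_nth[OF assms(3)]])
       (use assms(1) in \<open>auto simp: less_eq_vec_def\<close>)
qed

lemma increasing_cube_sequence_converges:
  fixes s :: "nat \<Rightarrow> real^'d"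
  assumes cube: "\<And>l. s l \<in> cube" and inc: "\<And>l. s l \<le> s (Suc l)"
  shows "\<exists>a. s \<longlonglongrightarrow> a"
proof
  show "s \<longlonglongrightarrow> (\<chi> c. SUP l. s l $ c)"
  proof (rule vec_tendstoI)
    fix c
    have "(\<lambda>l. s l $ c) \<longlonglongrightarrow> (SUP l. s l $ c)"
    proof (rule LIMSEQ_incseq_SUP)
      show "bdd_above (range (\<lambda>l. s l $ c))"
        using cube by (intro bdd_aboveI[of _ 1]) (auto simp: cube_def less_eq_vec_def)
      show "incseq (\<lambda>l. s l $ c)"
        using inc by (intro incseq_SucI) (auto simp: less_eq_vec_def)
    qed
    then show "(\<lambda>l. s l $ c) \<longlonglongrightarrow> (\<chi> c. SUP l. s l $ c) $ c" by simp
  qed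
qed

lemma average_in_cube:
  assumes "w \<ge> 1" "\<And>k. k < w \<Longrightarrow> v k \<in> cube"
  shows "(1 / real w) *\<^sub>R (\<Sum>k<w. v k) \<in> (cube :: (real^'d) set)"
proof -
  have "0 \<le> (\<Sum>k<w. v k $ i) \<and> (\<Sum>k<w. v k $ i) \<le> real w" for i
  proof
    show "0 \<le> (\<Sum>k<w. v k $ i)"
      using assms(2) by (intro sum_nonneg) (auto simp: cube_def less_eq_vec_def)
    have "(\<Sum>k<w. v k $ i) \<le> (\<Sum>k<w. 1)"
      using assms(2) by (intro sum_mono) (auto simp: cube_def less_eq_vec_def)
    then show "(\<Sum>k<w. v k $ i) \<le> real w" by simp
  qed
  then show ?thesis using assms(1)
    by (auto simp: cube_def less_eq_vec_def divide_simps)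
qed

lemma average_mono:
  assumes "\<And>k. k < w \<Longrightarrow> (a k :: real^'d) \<le> b k"
  shows "(1 / real w) *\<^sub>R (\<Sum>k<w. a k) \<le> (1 / real w) *\<^sub>R (\<Sum>k<w. b k)"
  using assms by (intro scaleR_left_mono sum_mono) auto

lemma average_const:
  assumes "w \<ge> 1"
  shows "(1 / real w) *\<^sub>R (\<Sum>k<w. (c::real^'d)) = c"
  using assms by (simp only: sum_constant_scaleR card_lessThan scaleR_scaleR) simp

lemma window_sum_shift:
  fixes a :: "int \<Rightarrow> 'b::ab_group_add"
  shows "(\<Sum>k<w. a (q - int k)) = a q - a (q - int w) + (\<Sum>k<w. a (q - 1 - int k))"
  by (induction w) (simp_all add: algebra_simps)

lemma int_mono_from_adjacent:
  fixes x :: "int \<Rightarrow> 'a::preorder"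
  assumes "\<And>i. x i \<le> x (i + 1)" "a \<le> b"
  shows "x a \<le> x b"
  using assms(2)
proof (induction b rule: int_ge_induct)
  case (step i) then show ?case using assms(1)[of i] order.trans by blast
qed simp

lemma C2_on_continuous:
  assumes "C2_on S h"
  shows "continuous_on S h"
proof -
  obtain h' where "\<forall>x\<in>S. (h has_derivative blinfun_apply (h' x)) (at x within S)"
    using assms unfolding C2_on_def by blast
  then show ?thesis by (intro has_derivative_continuous_on) blast
qed

section \<open>A mean value inequality for monotone gradients\<close>

lemma monotone_gradient_lower_bound:
  fixes \<Phi> :: "real^'d \<Rightarrow> real" and \<phi> :: "real^'d \<Rightarrow> real^'d"
  assumes D: "pos_diag D"
    and der: "\<And>x. x \<in> cube \<Longrightarrow> (\<Phi> has_derivative (\<lambda>h. (\<phi> x v* D) \<bullet> h)) (at x within cube)"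
    and mono: "\<And>x y. x \<in> cube \<Longrightarrow> y \<in> cube \<Longrightarrow> x \<le> y \<Longrightarrow> \<phi> x \<le> \<phi> y"
    and u: "u \<in> cube" and v: "v \<in> cube" and uv: "u \<le> v"
  shows "(\<phi> u v* D) \<bullet> (v - u) \<le> \<Phi> v - \<Phi> u"
proof -
  define p where "p = (\<lambda>t::real. u + t *\<^sub>R (v - u))"
  have segment: "p t \<in> cube \<and> u \<le> p t" if "t \<in> {0..1}" for t
  proof -
    have "0 \<le> p t $ i \<and> p t $ i \<le> 1 \<and> u$i \<le> p t $ i" for i
    proof -
      have a: "0 \<le> u$i" "v$i \<le> 1" "u$i \<le> v$i" using u v uv by (auto simp: cube_def less_eq_vec_def)
      have "p t $ i = u$i + t * (v$i - u$i)" by (simp add: p_def algebra_simps)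
      moreover have "0 \<le> t * (v$i - u$i)" using that a by auto
      moreover have "t * (v$i - u$i) \<le> v$i - u$i" using that a by (intro mult_left_le_one_le) auto
      ultimately show ?thesis using a by linarith
    qed
    then show ?thesis by (auto simp: cube_def less_eq_vec_def)
  qed
  have dp: "(p has_derivative (\<lambda>h. h *\<^sub>R (v - u))) (at t within {0..1})" for t
    unfolding p_def by (auto intro!: derivative_eq_intros)
  have chain: "((\<Phi> \<circ> p) has_derivative ((\<lambda>h. (\<phi> (p t) v* D) \<bullet> h) \<circ> (\<lambda>h. h *\<^sub>R (v - u))))
      (at t within {0..1})" if "t \<in> {0..1}" for t
    by (rule diff_chain_within[OF dp has_derivative_subset[OF der]]) (use segment that in auto)
  have "\<exists>t\<in>{0..1}. (\<Phi> \<circ> p) 1 - (\<Phi> \<circ> p) 0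
          = ((\<lambda>h. (\<phi> (p t) v* D) \<bullet> h) \<circ> (\<lambda>h. h *\<^sub>R (v - u))) (1 - 0)"
    by (rule mvt_very_simple[where f'="\<lambda>t. (\<lambda>h. (\<phi> (p t) v* D) \<bullet> h) \<circ> (\<lambda>h. h *\<^sub>R (v - u))"])
       (use chain in \<open>auto simp del: o_apply simp add: comp_def[of \<Phi> p, symmetric]\<close>)
  then obtain t where t: "t \<in> {0..1}" and mvt: "\<Phi> v - \<Phi> u = (\<phi> (p t) v* D) \<bullet> (v - u)"
    by (auto simp: p_def)
  have "\<phi> u \<le> \<phi> (p t)" using mono[OF u] segment[OF t] by auto
  then have "(\<phi> u v* D) \<bullet> (v - u) \<le> (\<phi> (p t) v* D) \<bullet> (v - u)"
    using uv by (intro diag_form_mono[OF D]) auto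
  then show ?thesis using mvt by simp
qed

locale admissible_system =
  fixes f :: "real^'d \<Rightarrow> real \<Rightarrow> real^'d" and g :: "real^'d \<Rightarrow> real^'d"
    and F :: "real^'d \<Rightarrow> real \<Rightarrow> real" and G :: "real^'d \<Rightarrow> real" and D :: "real^'d^'d"
  assumes admissible: "vector_admissible f g F G D"
begin

lemma diag: "pos_diag D"
  and f_cube: "x \<in> cube \<Longrightarrow> e \<in> Eset \<Longrightarrow> f x e \<in> cube"
  and g_cube: "x \<in> cube \<Longrightarrow> g x \<in> cube"
  and F_derivative: "e \<in> Eset \<Longrightarrow> x \<in> cube \<Longrightarrow>
        ((\<lambda>y. F y e) has_derivative (\<lambda>h. (f x e v* D) \<bullet> h)) (at x within cube)"
  and G_derivative: "x \<in> cube \<Longrightarrow> (G has_derivative (\<lambda>h. (g x v* D) \<bullet> h)) (at x within cube)"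
  and f_C2: "C2_on (cube \<times> Eset) (\<lambda>(x, e). f x e)"
  and g_C2: "C2_on cube g"
  and f_mono: "e \<in> Eset \<Longrightarrow> x \<in> cube \<Longrightarrow> y \<in> cube \<Longrightarrow> x \<le> y \<Longrightarrow> f x e \<le> f y e"
  and g_mono: "x \<in> cube \<Longrightarrow> y \<in> cube \<Longrightarrow> x \<le> y \<Longrightarrow> g x \<le> g y"
  and f_zero_param: "x \<in> cube \<Longrightarrow> f x 0 = 0"
  using admissible unfolding vector_admissible_def by blast+

definition step :: "real \<Rightarrow> real^'d \<Rightarrow> real^'d" where
  "step e y = f (g y) e"

lemma single_iter_Suc: "single_iter f g e x (Suc l) = step e (single_iter f g e x l)"
  by (simp add: single_iter_def step_def)

lemma step_cube: "e \<in> Eset \<Longrightarrow> y \<in> cube \<Longrightarrow> step e y \<in> cube"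
  by (simp add: step_def f_cube g_cube)

lemma step_mono: "e \<in> Eset \<Longrightarrow> x \<in> cube \<Longrightarrow> y \<in> cube \<Longrightarrow> x \<le> y \<Longrightarrow> step e x \<le> step e y"
  by (simp add: step_def f_mono g_mono g_cube)

lemma f_continuous:
  assumes "e \<in> Eset"
  shows "continuous_on cube (\<lambda>x. f x e)"
proof -
  have "continuous_on cube (\<lambda>x. (x, e))" by (intro continuous_intros)
  moreover have "(\<lambda>x. (x, e)) ` cube \<subseteq> cube \<times> Eset" using assms by auto
  ultimately show ?thesis
    using continuous_on_compose2[OF C2_on_continuous[OF f_C2], of cube "\<lambda>x. (x, e)"] by simp
qed

lemma step_continuous: "e \<in> Eset \<Longrightarrow> continuous_on cube (step e)"
  unfolding step_def
  using continuous_on_compose2[OF f_continuous C2_on_continuous[OF g_C2]] g_cube by auto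

lemma potential_continuous: "e \<in> Eset \<Longrightarrow> continuous_on cube (\<lambda>x. potU g F G D x e)"
proof -
  assume e: "e \<in> Eset"
  have "continuous_on cube (\<lambda>y. F y e)"
    using F_derivative[OF e] by (rule has_derivative_continuous_on)
  then have "continuous_on cube (\<lambda>x. F (g x) e)"
    using continuous_on_compose2[OF _ C2_on_continuous[OF g_C2]] g_cube by auto
  moreover have "continuous_on cube G"
    using G_derivative by (rule has_derivative_continuous_on)
  ultimately show ?thesis unfolding potU_def diag_form[OF diag]
    by (intro continuous_intros C2_on_continuous[OF g_C2])
qed

text \<open>With b = T(a) the increments of G and F(\<cdot>;e) are
  bounded below by their linearisations at a resp. g(a), and the bilinear
  terms of U cancel exactly against these linearisations.\<close>

lemma potential_step:
  assumes e: "e \<in> Eset" and a: "a \<in> cube" and sub: "a \<le> step e a"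
  shows "potU g F G D (step e a) e \<le> potU g F G D a e"
proof -
  define b where "b = step e a"
  have ga: "g a \<in> cube" using g_cube a .
  have b: "b \<in> cube" using step_cube[OF e a] b_def by simp
  have gb: "g b \<in> cube" using g_cube b .
  have ab: "a \<le> b" using sub b_def by simp
  have G_incr: "(g a v* D) \<bullet> (b - a) \<le> G b - G a"
    by (rule monotone_gradient_lower_bound[OF diag G_derivative g_mono a b ab])
  have F_incr: "(f (g a) e v* D) \<bullet> (g b - g a) \<le> F (g b) e - F (g a) e"
    by (rule monotone_gradient_lower_bound[OF diag F_derivative[OF e] f_mono[OF e] ga gb])
       (use g_mono a b ab in auto)
  have cancel: "(g b v* D) \<bullet> b - (g a v* D) \<bullet> a - (g a v* D) \<bullet> (b - a) - (b v* D) \<bullet> (g b - g a) = 0"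
    unfolding diag_form[OF diag] sum_subtractf[symmetric] by (simp add: algebra_simps)
  show ?thesis using G_incr F_incr cancel unfolding potU_def b_def[symmetric] b_def step_def
    by linarith
qed

lemma single_iter_from_subsolution:
  assumes e: "e \<in> Eset" and x: "x \<in> cube" and sub: "x \<le> step e x"
  shows "single_iter f g e x l \<in> cube \<and> x \<le> single_iter f g e x l
      \<and> single_iter f g e x l \<le> single_iter f g e x (Suc l)
      \<and> potU g F G D (single_iter f g e x l) e \<le> potU g F G D x e"
proof (induction l)
  case 0
  show ?case using x sub by (simp add: single_iter_def step_def)
next
  case (Suc l)
  let ?s = "single_iter f g e x"
  have cube: "?s (Suc l) \<in> cube" using Suc step_cube[OF e] by (simp add: single_iter_Suc)
  moreover have "x \<le> ?s (Suc l)" using Suc order.trans by blast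
  moreover have "?s (Suc l) \<le> ?s (Suc (Suc l))"
    using Suc cube by (simp only: single_iter_Suc) (intro step_mono[OF e]; simp)
  moreover have "potU g F G D (?s (Suc l)) e \<le> potU g F G D (?s l) e"
    using Suc potential_step[OF e] by (simp add: single_iter_Suc)
  ultimately show ?case using Suc by linarith
qed

lemma single_iter_limit:
  assumes e: "e \<in> Eset" and x: "x \<in> cube" and sub: "x \<le> step e x"
  shows "\<exists>xinf. single_iter f g e x \<longlonglongrightarrow> xinf \<and> x \<le> xinf
           \<and> potU g F G D xinf e \<le> potU g F G D x e"
proof -
  note iter = single_iter_from_subsolution[OF e x sub]
  obtain xinf where conv: "single_iter f g e x \<longlonglongrightarrow> xinf"
    using increasing_cube_sequence_converges iter by blast
  have xinf: "xinf \<in> cube" using limit_in_cube iter conv by blast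
  have "x \<le> xinf" by (rule limit_le[OF _ tendsto_const conv]) (use iter in blast)
  moreover have "(\<lambda>l. potU g F G D (single_iter f g e x l) e) \<longlonglongrightarrow> potU g F G D xinf e"
    by (rule continuous_on_tendsto_compose[OF potential_continuous[OF e] conv xinf])
       (use iter in auto)
  then have "potU g F G D xinf e \<le> potU g F G D x e"
    by (rule LIMSEQ_le_const2) (use iter in blast)
  ultimately show ?thesis using conv by blast
qed

end

section \<open>The one-sided spatially coupled recursion\<close>

locale coupled_system = admissible_system f g F G D
  for f :: "real^'d \<Rightarrow> real \<Rightarrow> real^'d" and g F G D +
  fixes L w :: nat and e :: real
  assumes width: "1 \<le> w" and param: "e \<in> Eset"
begin

abbreviation i0 :: int where "i0 \<equiv> i0_of w"

lemma i0_bounds: "0 \<le> i0" "2 * i0 \<le> int w - 1"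
  using width unfolding i0_of_def by presburger+

definition eps_at :: "int \<Rightarrow> real" where
  "eps_at i = (if - int L \<le> i \<and> i \<le> int L then e else 0)"

definition window_avg :: "(int \<Rightarrow> real^'d) \<Rightarrow> int \<Rightarrow> real^'d" where
  "window_avg x p = (1 / real w) *\<^sub>R (\<Sum>j<w. g (x (p + int j)))"

definition contrib :: "(int \<Rightarrow> real^'d) \<Rightarrow> int \<Rightarrow> real^'d" where
  "contrib x p = f (window_avg x p) (eps_at p)"

definition update :: "(int \<Rightarrow> real^'d) \<Rightarrow> int \<Rightarrow> real^'d" where
  "update x i = (1 / real w) *\<^sub>R (\<Sum>k<w. contrib x (i - int k))"

lemma sc_iter_Suc:
  "sc_iter f g L w e (Suc l) = (\<lambda>i. if i < - int L then 0 else update (sc_iter f g L w e l) (min i i0))"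
  unfolding update_def contrib_def window_avg_def eps_at_def
  by (intro ext) (simp add: Let_def min_def ac_simps diff_add_eq add_diff_eq)

definition profile :: "(int \<Rightarrow> real^'d) \<Rightarrow> bool" where
  "profile x \<longleftrightarrow> (\<forall>i. x i \<in> cube) \<and> (\<forall>i. x i \<le> x (i + 1)) \<and> (\<forall>m. i0 < m \<longrightarrow> x m = x i0)"

lemma eps_at_cases: "eps_at p = e \<or> eps_at p = 0"
  by (simp add: eps_at_def)

lemma eps_at_Eset: "eps_at p \<in> Eset"
  using eps_at_cases[of p] param by (auto simp: Eset_def)

lemma profile_mono: "profile x \<Longrightarrow> a \<le> b \<Longrightarrow> x a \<le> x b"
  unfolding profile_def by (blast intro: int_mono_from_adjacent)

lemma profile_le_center: "profile x \<Longrightarrow> x p \<le> x i0"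
  by (cases "p \<le> i0") (auto simp: profile_mono profile_def)

lemma window_avg_cube: "\<forall>i. x i \<in> cube \<Longrightarrow> window_avg x p \<in> cube"
  unfolding window_avg_def by (rule average_in_cube[OF width]) (simp add: g_cube)

lemma contrib_cube: "\<forall>i. x i \<in> cube \<Longrightarrow> contrib x p \<in> cube"
  unfolding contrib_def by (intro f_cube window_avg_cube eps_at_Eset)

lemma update_cube: "\<forall>i. x i \<in> cube \<Longrightarrow> update x i \<in> cube"
  unfolding update_def by (rule average_in_cube[OF width]) (simp add: contrib_cube)

text \<open>For positions q \<le> i0 the contribution at q dominates the one a full
  window to the left: its window average is larger (monotonicity of the profile
  and of g) and the left position either has the same parameter e, or
  parameter 0 and hence contribution 0.\<close>

lemma contrib_window_mono:
  assumes x: "profile x" and q: "q \<le> i0"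
  shows "contrib x (q - int w) \<le> contrib x q"
proof -
  have cube: "\<forall>i. x i \<in> cube" using x by (simp add: profile_def)
  show ?thesis
  proof (cases "eps_at (q - int w) = 0")
    case True
    then have "contrib x (q - int w) = 0"
      unfolding contrib_def using f_zero_param window_avg_cube[OF cube] by simp
    then show ?thesis using contrib_cube[OF cube] by (simp add: cube_def)
  next
    case False
    then have "eps_at (q - int w) = e" "eps_at q = e"
      using q i0_bounds by (auto simp: eps_at_def)
    moreover have "window_avg x (q - int w) \<le> window_avg x q"
      unfolding window_avg_def using cube
      by (intro average_mono g_mono) (auto intro: profile_mono[OF x])
    ultimately show ?thesis unfolding contrib_def
      using f_mono param window_avg_cube[OF cube] by auto
  qed
qed

lemma update_shift_mono:
  assumes x: "profile x" and q: "q \<le> i0"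
  shows "update x (q - 1) \<le> update x q"
proof -
  have "(\<Sum>k<w. contrib x (q - 1 - int k)) \<le> (\<Sum>k<w. contrib x (q - int k))"
    using window_sum_shift[where a="contrib x" and w=w and q=q] contrib_window_mono[OF x q] by simp
  then show ?thesis unfolding update_def by (simp add: scaleR_left_mono)
qed

text \<open>At the centre the coupled update is dominated by the single-system step:
  every window average is below g(x i0) and every parameter is at most e.\<close>

lemma update_center_le_step:
  assumes x: "profile x"
  shows "update x i0 \<le> step e (x i0)"
proof -
  have cube: "\<forall>i. x i \<in> cube" using x by (simp add: profile_def)
  have "contrib x (i0 - int k) \<le> step e (x i0)" for k
  proof -
    have "window_avg x (i0 - int k) \<le> (1 / real w) *\<^sub>R (\<Sum>j<w. g (x i0))"
      unfolding window_avg_def using cube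
      by (intro average_mono g_mono) (auto intro: profile_le_center[OF x])
    then have "window_avg x (i0 - int k) \<le> g (x i0)" by (simp only: average_const[OF width])
    then have "contrib x (i0 - int k) \<le> f (g (x i0)) (eps_at (i0 - int k))"
      unfolding contrib_def using cube by (intro f_mono eps_at_Eset window_avg_cube g_cube) auto
    also have "\<dots> \<le> step e (x i0)"
      using eps_at_cases[of "i0 - int k"] f_cube[OF g_cube param] f_zero_param[OF g_cube] cube
      by (auto simp: step_def cube_def)
    finally show ?thesis .
  qed
  then have "update x i0 \<le> (1 / real w) *\<^sub>R (\<Sum>k<w. step e (x i0))"
    unfolding update_def by (intro average_mono) auto
  then show ?thesis by (simp only: average_const[OF width])
qed

lemma profile_update:
  assumes x: "profile x"
  shows "profile (\<lambda>i. if i < - int L then 0 else update x (min i i0))"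
proof -
  have cube: "\<forall>i. x i \<in> cube" using x by (simp add: profile_def)
  have "(if i < - int L then 0 else update x (min i i0))
      \<le> (if i + 1 < - int L then 0 else update x (min (i + 1) i0))" for i
  proof -
    consider "i + 1 < - int L" | "i + 1 = - int L" | "- int L \<le> i" "i + 1 \<le> i0" | "i0 \<le> i"
      by linarith
    then show ?thesis
    proof cases
      case 2 then show ?thesis using update_cube[OF cube] by (simp add: cube_def)
    next
      case 3 then show ?thesis using update_shift_mono[OF x, of "i + 1"] by (simp add: min_def)
    qed (use i0_bounds in \<open>auto simp: min_def\<close>)
  qed
  then show ?thesis
    unfolding profile_def using update_cube[OF cube] i0_bounds
    by (auto simp: cube_def min_def less_eq_vec_def)
qed

lemma sc_iter_profile: "profile (sc_iter f g L w e l)"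
proof (induction l)
  case 0
  show ?case using i0_bounds by (auto simp: profile_def cube_def less_eq_vec_def)
next
  case (Suc l)
  show ?case unfolding sc_iter_Suc using profile_update[OF Suc] .
qed

text \<open>The centre value of the coupled fixed point is a sub-solution of the
  single system: x(l+1)(i0) \<le> T(x(l)(i0)) survives the limit by continuity of T.\<close>

lemma fixed_point_subsolution:
  assumes lim: "\<forall>i. (\<lambda>l. sc_iter f g L w e l i) \<longlonglongrightarrow> X i"
  shows "X i0 \<in> cube \<and> X i0 \<le> step e (X i0)"
proof -
  let ?x = "\<lambda>l. sc_iter f g L w e l i0"
  have cube: "?x l \<in> cube" for l using sc_iter_profile by (simp add: profile_def)
  have X: "X i0 \<in> cube" by (rule limit_in_cube[of ?x]) (use cube lim in auto)
  have "?x (Suc l) \<le> step e (?x l)" for l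
    using update_center_le_step[OF sc_iter_profile] i0_bounds(1)
    by (simp add: sc_iter_Suc del: sc_iter.simps)
  moreover have "(\<lambda>l. ?x (Suc l)) \<longlonglongrightarrow> X i0" using lim LIMSEQ_Suc by blast
  moreover have "(\<lambda>l. step e (?x l)) \<longlonglongrightarrow> step e (X i0)"
    by (rule continuous_on_tendsto_compose[OF step_continuous[OF param] lim[rule_format] X])
       (use cube in simp)
  ultimately have "X i0 \<le> step e (X i0)" by (rule limit_le)
  with X show ?thesis by blast
qed

end

theorem lemma10:
  fixes f :: "real^'d \<Rightarrow> real \<Rightarrow> real^'d" and g :: "real^'d \<Rightarrow> real^'d"
    and F :: "real^'d \<Rightarrow> real \<Rightarrow> real" and G :: "real^'d \<Rightarrow> real"
    and D :: "real^'d^'d" and e :: real and L w :: nat and X :: "int \<Rightarrow> real^'d"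
  assumes adm: "vector_admissible f g F G D"
    and e: "e \<in> Eset"
    and w: "w \<ge> 1"
    and lim: "\<forall>i. (\<lambda>l. sc_iter f g L w e l i) \<longlonglongrightarrow> X i"
  shows "\<exists>xinf. (\<lambda>l. single_iter f g e (X (i0_of w)) l) \<longlonglongrightarrow> xinf
           \<and> X (i0_of w) \<le> xinf
           \<and> potU g F G D (X (i0_of w)) e \<ge> potU g F G D xinf e"
proof -
  interpret coupled_system f g F G D L w e
    using adm e w by unfold_locales
  have "X (i0_of w) \<in> cube" "X (i0_of w) \<le> step e (X (i0_of w))"
    using fixed_point_subsolution[OF lim] by auto
  from single_iter_limit[OF e this] show ?thesis by auto
qed

end
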